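(* Let $s\in(\frac12,1)$, $x_0\in\mathbb R^N$, $A,B\in\mathbb R$, and $\mathcal C(x)=A|x-x_0|^{2s-1}+B$. Then $\Delta^s_\infty\mathcal C(x)=0$ for every $x\neq x_0$.
   Context: $S^{N-1}$ unit sphere. For a function $\phi$ differentiable at $x$ (with the integrals below convergent), the infinity fractional Laplacian is: if $\nabla\phi(x)\ne0$ and $v=\nabla\phi(x)/|\nabla\phi(x)|$, $\Delta^s_\infty\phi(x)=\int_0^\infty\frac{\phi(x+\eta v)+\phi(x-\eta v)-2\phi(x)}{\eta^{1+2s}}d\eta$; if $\nabla\phi(x)=0$, $\Delta^s_\infty\phi(x)=\sup_{y\in S^{N-1}}\int_0^\infty\frac{\phi(x+\eta y)-\phi(x)}{\eta^{1+2s}}d\eta+\inf_{z\in S^{N-1}}\int_0^\infty\frac{\phi(x-\eta z)-\phi(x)}{\eta^{1+2s}}d\eta$. *)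

theory Defs
  imports "HOL-Analysis.Analysis"
begin

text \<open>Gradient of a real-valued function at a point (meaningful when the function
is differentiable there; the Frechet derivative in a Euclidean space is unique).\<close>
definition grad :: "('a::euclidean_space \<Rightarrow> real) \<Rightarrow> 'a \<Rightarrow> 'a" where
  "grad \<phi> x = (SOME g. (\<phi> has_derivative (\<lambda>h. g \<bullet> h)) (at x))"

definition two_sided_integrand :: "real \<Rightarrow> ('a::euclidean_space \<Rightarrow> real) \<Rightarrow> 'a \<Rightarrow> 'a \<Rightarrow> real \<Rightarrow> real" where
  "two_sided_integrand s \<phi> x v = (\<lambda>\<eta>. (\<phi> (x + \<eta> *\<^sub>R v) + \<phi> (x - \<eta> *\<^sub>R v) - 2 * \<phi> x) / \<eta> powr (1 + 2 * s))"

definition one_sided_integrand :: "real \<Rightarrow> ('a::euclidean_space \<Rightarrow> real) \<Rightarrow> 'a \<Rightarrow> 'a \<Rightarrow> real \<Rightarrow> real" where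
  "one_sided_integrand s \<phi> x y = (\<lambda>\<eta>. (\<phi> (x + \<eta> *\<^sub>R y) - \<phi> x) / \<eta> powr (1 + 2 * s))"

definition inf_frac_lap_defined :: "real \<Rightarrow> ('a::euclidean_space \<Rightarrow> real) \<Rightarrow> 'a \<Rightarrow> bool" where
  "inf_frac_lap_defined s \<phi> x \<longleftrightarrow> \<phi> differentiable (at x) \<and>
     (if grad \<phi> x \<noteq> 0
      then two_sided_integrand s \<phi> x (grad \<phi> x /\<^sub>R norm (grad \<phi> x)) integrable_on {0<..}
      else (\<forall>y\<in>sphere 0 1. one_sided_integrand s \<phi> x y integrable_on {0<..}
                          \<and> one_sided_integrand s \<phi> x (- y) integrable_on {0<..}))"

definition inf_frac_lap :: "real \<Rightarrow> ('a::euclidean_space \<Rightarrow> real) \<Rightarrow> 'a \<Rightarrow> real" where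
  "inf_frac_lap s \<phi> x =
     (if grad \<phi> x \<noteq> 0
      then integral {0<..} (two_sided_integrand s \<phi> x (grad \<phi> x /\<^sub>R norm (grad \<phi> x)))
      else (SUP y\<in>sphere 0 1. integral {0<..} (one_sided_integrand s \<phi> x y))
         + (INF z\<in>sphere 0 1. integral {0<..} (one_sided_integrand s \<phi> x (- z))))"

end

theory Submission
  imports Defs "HOL-Real_Asymp.Real_Asymp"
begin

text \<open>On the line through \<open>x\<^sub>0\<close> and \<open>x\<close>, the gradient direction of the profile, the integrand
  is \<open>A\<close> times the symmetric difference quotient \<open>(|r+t|^a + |r-t|^a - 2 r^a) / t^(a+2)\<close>, with
  \<open>r = |x - x\<^sub>0|\<close> and \<open>a = 2 s - 1\<close>. Split it into a forward and a backward quotient. Because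
  the denominator has homogeneity exactly \<open>a + 2\<close>, the substitution \<open>t \<mapsto> r t / (r + t)\<close> turns
  the backward quotient into minus the forward one, and the involution \<open>u \<mapsto> r + r\<^sup>2 / (u - r)\<close>
  of \<open>(r, \<infinity>)\<close> maps the backward quotient to itself. Hence on \<open>[e, b]\<close> everything cancels except
  the backward quotient integrated over \<open>[r e/(r+e), e]\<close> and over a window around \<open>r\<close>, which
  vanish as \<open>e \<rightarrow> 0\<close> and \<open>b \<rightarrow> \<infinity>\<close>. The quotient is negative near \<open>0\<close> and positive near \<open>\<infinity>\<close>,
  so monotone convergence turns these limits into an integral over \<open>(0, \<infinity>)\<close>.\<close>

lemma has_integral_Ioc_of_tendsto_at_right:
  fixes h :: "real \<Rightarrow> real"
  assumes "0 < c"
    and int: "\<And>e. 0 < e \<Longrightarrow> h integrable_on {e..c}"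
    and nonneg: "\<And>t. 0 < t \<Longrightarrow> t \<le> c \<Longrightarrow> 0 \<le> h t"
    and lim: "((\<lambda>e. integral {e..c} h) \<longlongrightarrow> l) (at_right 0)"
  shows "(h has_integral l) {0<..c}"
proof -
  define e where "e n = c / real (Suc n)" for n
  define f where "f n x = (if x \<in> {e n..c} then h x else 0)" for n x
  have e_pos: "0 < e n" for n
    using \<open>0 < c\<close> by (simp add: e_def)
  have e_dec: "e (Suc n) \<le> e n" for n
    using \<open>0 < c\<close> by (simp add: e_def frac_le)
  have e_to_0: "filterlim e (at_right 0) sequentially"
    unfolding e_def using \<open>0 < c\<close> by real_asymp
  have f_int: "(f n has_integral integral {e n..c} h) {0<..c}" for n
  proof -
    have "{e n..c} \<inter> {0<..c} = {e n..c}"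
      using e_pos[of n] by auto
    then show ?thesis
      unfolding f_def has_integral_restrict_Int using int[OF e_pos] by (simp add: has_integral_integral)
  qed
  have lim_seq: "(\<lambda>n. integral {0<..c} (f n)) \<longlonglongrightarrow> l"
  proof -
    have "integral {0<..c} (f n) = integral {e n..c} h" for n
      using f_int by (rule integral_unique)
    then show ?thesis
      using filterlim_compose[OF lim e_to_0] by simp
  qed
  have "h integrable_on {0<..c} \<and> (\<lambda>n. integral {0<..c} (f n)) \<longlonglongrightarrow> integral {0<..c} h"
  proof (rule monotone_convergence_increasing)
    show "f n integrable_on {0<..c}" for n
      using f_int by blast
    show "f n x \<le> f (Suc n) x" if "x \<in> {0<..c}" for n x
      using that e_dec[of n] nonneg[of x] by (auto simp: f_def)
    show "(\<lambda>n. f n x) \<longlonglongrightarrow> h x" if x: "x \<in> {0<..c}" for x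
    proof (rule tendsto_eventually)
      have "\<forall>\<^sub>F n in sequentially. e n < x"
        using e_to_0 x by (intro order_tendstoD(2)) (auto simp: filterlim_at)
      then show "\<forall>\<^sub>F n in sequentially. f n x = h x"
        by eventually_elim (use x in \<open>auto simp: f_def\<close>)
    qed
    show "bounded (range (\<lambda>n. integral {0<..c} (f n)))"
      using lim_seq by (rule convergent_imp_bounded)
  qed
  then show ?thesis
    using LIMSEQ_unique[OF lim_seq] by (metis has_integral_integrable_integral)
qed

lemma has_integral_Ioi_of_boundary_limits:
  fixes h f g :: "real \<Rightarrow> real"
  assumes "0 < c" "c \<le> d"
    and int: "\<And>e b. 0 < e \<Longrightarrow> h integrable_on {e..b}"
    and integral_eq: "\<And>e b. 0 < e \<Longrightarrow> e \<le> c \<Longrightarrow> d \<le> b \<Longrightarrow> integral {e..b} h = g b - f e"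
    and nonpos: "\<And>t. 0 < t \<Longrightarrow> t \<le> c \<Longrightarrow> h t \<le> 0"
    and nonneg: "\<And>t. d \<le> t \<Longrightarrow> 0 \<le> h t"
    and f_lim: "(f \<longlongrightarrow> l) (at_right 0)"
    and g_lim: "(g \<longlongrightarrow> u) at_top"
  shows "(h has_integral (u - l)) {0<..}"
proof -
  have split: "integral {e..b} h = integral {e..m} h + integral {m..b} h"
    if "0 < e" "e \<le> m" "m \<le> b" for e m b
    using that int by (intro Henstock_Kurzweil_Integration.integral_combine[symmetric]) auto
  have left_eq: "integral {e..c} (\<lambda>t. - h t) = f e - f c" if "0 < e" "e \<le> c" for e
    using split[of e c d] integral_eq[of e d] integral_eq[of c d] that assms(1,2) by simp
  have left_ev: "\<forall>\<^sub>F e in at_right 0. f e - f c = integral {e..c} (\<lambda>t. - h t)"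
    unfolding eventually_at_right_field using \<open>0 < c\<close> left_eq by (intro exI[of _ c]) auto
  have "((\<lambda>e. f e - f c) \<longlongrightarrow> l - f c) (at_right 0)"
    using f_lim by (intro tendsto_intros)
  then have left_lim: "((\<lambda>e. integral {e..c} (\<lambda>t. - h t)) \<longlongrightarrow> l - f c) (at_right 0)"
    using left_ev by (rule Lim_transform_eventually)
  have "((\<lambda>t. - h t) has_integral l - f c) {0<..c}"
  proof (rule has_integral_Ioc_of_tendsto_at_right[OF \<open>0 < c\<close> _ _ left_lim])
    show "(\<lambda>t. - h t) integrable_on {e..c}" if "0 < e" for e
      using int[OF that] by (rule integrable_neg)
    show "0 \<le> - h t" if "0 < t" "t \<le> c" for t
      using nonpos[OF that] by simp
  qed
  from has_integral_neg[OF this] have left: "(h has_integral f c - l) {0<..c}"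
    by simp
  have right_eq: "integral {d..b} h = g b - g d" if "d \<le> b" for b
    using split[of c d b] integral_eq[of c b] integral_eq[of c d] that assms(1,2) by simp
  have right_ev: "\<forall>\<^sub>F b in at_top. g b - g d = integral {d..b} h"
    using eventually_ge_at_top[of d] by eventually_elim (simp add: right_eq)
  have "((\<lambda>b. g b - g d) \<longlongrightarrow> u - g d) at_top"
    using g_lim by (intro tendsto_intros)
  then have "((\<lambda>b. integral {d..b} h) \<longlongrightarrow> u - g d) at_top"
    using right_ev by (rule Lim_transform_eventually)
  then have right: "(h has_integral u - g d) {d..}"
    using \<open>0 < c\<close> \<open>c \<le> d\<close> int nonneg by (intro has_integral_to_inf) auto
  have middle: "(h has_integral g d - f c) {c..d}"
    using int[of c d] integral_eq[of c d] assms(1,2) by (simp add: has_integral_integral)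
  have left_middle: "(h has_integral (f c - l) + (g d - f c)) ({0<..c} \<union> {c..d})"
  proof (rule has_integral_Un[OF left middle])
    show "negligible ({0<..c} \<inter> {c..d})"
      by (rule negligible_subset[of "{c}"]) auto
  qed
  have "(h has_integral (f c - l) + (g d - f c) + (u - g d)) ({0<..c} \<union> {c..d} \<union> {d..})"
  proof (rule has_integral_Un[OF left_middle right])
    show "negligible (({0<..c} \<union> {c..d}) \<inter> {d..})"
      by (rule negligible_subset[of "{d}"]) (use \<open>c \<le> d\<close> in auto)
  qed
  moreover have "{0<..c} \<union> {c..d} \<union> {d..} = {0<..}"
    using assms(1,2) by auto
  ultimately show ?thesis
    by simp
qed

definition fwd_quot :: "real \<Rightarrow> real \<Rightarrow> real \<Rightarrow> real" where
  "fwd_quot r a t = ((r + t) powr a - r powr a) / t powr (a + 2)"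

definition bwd_quot :: "real \<Rightarrow> real \<Rightarrow> real \<Rightarrow> real" where
  "bwd_quot r a t = (\<bar>r - t\<bar> powr a - r powr a) / t powr (a + 2)"

definition sym_quot :: "real \<Rightarrow> real \<Rightarrow> real \<Rightarrow> real" where
  "sym_quot r a t = (\<bar>r + t\<bar> powr a + \<bar>r - t\<bar> powr a - 2 * r powr a) / t powr (a + 2)"

lemma powr_add_2: "0 < (x::real) \<Longrightarrow> x powr (a + 2) = x powr a * x^2"
  by (simp add: powr_add powr_numeral)

context
  fixes r a :: real
  assumes r: "0 < r" and a_pos: "0 < a" and a_less_1: "a < 1"
begin

lemma continuous_on_bwd_quot: "continuous_on {0<..} (bwd_quot r a)"
  unfolding bwd_quot_def using a_pos
  by (intro continuous_intros continuous_on_powr') auto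

lemma continuous_on_sym_quot: "continuous_on {0<..} (sym_quot r a)"
  unfolding sym_quot_def using a_pos r
  by (intro continuous_intros continuous_on_powr') auto

lemma bwd_quot_integrable: "0 < c \<Longrightarrow> bwd_quot r a integrable_on {c..d}"
  by (rule integrable_continuous_interval, rule continuous_on_subset[OF continuous_on_bwd_quot]) auto

lemma sym_quot_integrable: "0 < c \<Longrightarrow> sym_quot r a integrable_on {c..d}"
  by (rule integrable_continuous_interval, rule continuous_on_subset[OF continuous_on_sym_quot]) auto

lemma sym_quot_split: "0 < t \<Longrightarrow> sym_quot r a t = fwd_quot r a t + bwd_quot r a t"
  unfolding sym_quot_def fwd_quot_def bwd_quot_def using r
  by (simp add: diff_divide_distrib add_divide_distrib)

lemma bwd_quot_inversion_fwd:
  assumes t: "0 < t"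
  shows "(r^2 / (r + t)^2) * bwd_quot r a (r * t / (r + t)) = - fwd_quot r a t"
proof -
  define q where "q = r + t"
  have q: "0 < q" using r t by (simp add: q_def)
  have ab: "\<bar>r - r * t / q\<bar> = r^2 / q"
    using q r t by (simp add: q_def field_simps power2_eq_square)
  have "bwd_quot r a (r * t / q) = ((r^2/q) powr a - r powr a) / (r * t / q) powr (a + 2)"
    unfolding bwd_quot_def ab ..
  also have "\<dots> = (r powr a * r powr a / q powr a - r powr a)
                   / ((r powr a * t powr a / q powr a) * (r * t / q)^2)"
    using q r t by (simp add: powr_add_2 powr_divide powr_mult power2_eq_square)
  also have "\<dots> = (r powr a - q powr a) * q^2 / (t powr a * t^2 * r^2)"
    using q r t by (simp add: field_simps power2_eq_square)
  finally have bwd: "bwd_quot r a (r * t / q) = (r powr a - q powr a) * q^2 / (t powr a * t^2 * r^2)" .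
  have fwd: "fwd_quot r a t = (q powr a - r powr a) / (t powr a * t^2)"
    unfolding fwd_quot_def q_def using t by (simp add: powr_add_2)
  show ?thesis
    unfolding q_def[symmetric] bwd fwd using q r t by (simp add: field_simps power2_eq_square)
qed

lemma bwd_quot_inversion_bwd:
  assumes u: "r < u"
  shows "- (r^2 / (u - r)^2) * bwd_quot r a (r + r^2 / (u - r)) = bwd_quot r a u"
proof -
  define p where "p = u - r"
  have p: "0 < p" and u_pos: "0 < u" using u r by (simp_all add: p_def)
  have ab: "\<bar>r - (r + r^2/p)\<bar> = r^2 / p" using p by simp
  have image: "r + r^2/p = r * u / p" using p by (simp add: p_def field_simps power2_eq_square)
  have "bwd_quot r a (r + r^2/p) = ((r^2/p) powr a - r powr a) / (r * u / p) powr (a + 2)"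
    unfolding bwd_quot_def ab image[symmetric] ..
  also have "\<dots> = (r powr a * r powr a / p powr a - r powr a)
                   / ((r powr a * u powr a / p powr a) * (r * u / p)^2)"
    using p r u_pos by (simp add: powr_add_2 powr_divide powr_mult power2_eq_square)
  also have "\<dots> = (r powr a - p powr a) * p^2 / (u powr a * u^2 * r^2)"
    using p r u_pos by (simp add: field_simps power2_eq_square)
  finally have lhs: "bwd_quot r a (r + r^2/p) = (r powr a - p powr a) * p^2 / (u powr a * u^2 * r^2)" .
  have rhs: "bwd_quot r a u = (p powr a - r powr a) / (u powr a * u^2)"
    unfolding bwd_quot_def p_def using u u_pos by (simp add: powr_add_2)
  show ?thesis
    unfolding p_def[symmetric] lhs rhs using p r u_pos by (simp add: field_simps power2_eq_square)
qed

lemma has_integral_fwd_quot: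
  assumes "0 < c" "c \<le> d"
  shows "(fwd_quot r a has_integral - integral {r*c/(r+c)..r*d/(r+d)} (bwd_quot r a)) {c..d}"
proof -
  have mono: "r * x / (r + x) \<le> r * y / (r + y)" if "0 \<le> x" "x \<le> y" for x y
    using that r by (simp add: field_simps mult_left_mono)
  have "((\<lambda>t. (r^2/(r+t)^2) *\<^sub>R bwd_quot r a (r*t/(r+t))) has_integral
          integral {r*c/(r+c)..r*d/(r+d)} (bwd_quot r a)) {c..d}"
  proof (rule has_integral_substitution)
    show "r * c / (r + c) \<le> r * d / (r + d)"
      using assms by (intro mono) auto
    show "(\<lambda>t. r * t / (r + t)) ` {c..d} \<subseteq> {r*c/(r+c)..r*d/(r+d)}"
      using assms by (auto intro!: mono)
    have "0 < r*c/(r+c)"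
      using assms r by simp
    then show "continuous_on {r*c/(r+c)..r*d/(r+d)} (bwd_quot r a)"
      by (intro continuous_on_subset[OF continuous_on_bwd_quot]) auto
    fix x assume "x \<in> {c..d}"
    then have "r + x \<noteq> 0"
      using assms r by auto
    then show "((\<lambda>t. r * t / (r + t)) has_field_derivative r^2/(r+x)^2) (at x within {c..d})"
      by (auto intro!: derivative_eq_intros simp: field_simps power2_eq_square)
  qed fact
  then have "((\<lambda>t. - ((r^2/(r+t)^2) *\<^sub>R bwd_quot r a (r*t/(r+t)))) has_integral
               - integral {r*c/(r+c)..r*d/(r+d)} (bwd_quot r a)) {c..d}"
    by (rule has_integral_neg)
  moreover have "- ((r^2/(r+t)^2) *\<^sub>R bwd_quot r a (r*t/(r+t))) = fwd_quot r a t"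
    if "t \<in> {c..d}" for t
    using bwd_quot_inversion_fwd that assms by auto
  ultimately show ?thesis
    using has_integral_cong by (metis (no_types, lifting))
qed

lemma has_integral_bwd_quot_beyond:
  assumes "r < c" "c \<le> d"
  shows "(bwd_quot r a has_integral - integral {r + r^2/(d-r)..r + r^2/(c-r)} (bwd_quot r a)) {c..d}"
proof -
  let ?g = "\<lambda>u. r + r^2/(u-r)"
  have "((\<lambda>u. - (r^2/(u-r)^2) *\<^sub>R bwd_quot r a (?g u)) has_integral
          integral {?g c..?g d} (bwd_quot r a) - integral {?g d..?g c} (bwd_quot r a)) {c..d}"
  proof (rule has_integral_substitution_general[of "{}"])
    show "?g ` {c..d} \<subseteq> {?g d..?g c}"
      using assms r by (auto intro!: divide_left_mono mult_pos_pos)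
    have "0 < ?g d"
      using assms r by (intro add_pos_nonneg) auto
    then show "continuous_on {?g d..?g c} (bwd_quot r a)"
      by (intro continuous_on_subset[OF continuous_on_bwd_quot]) auto
    show "continuous_on {c..d} ?g"
      using assms by (intro continuous_intros) auto
    fix x assume "x \<in> {c..d} - {}"
    then have "x - r \<noteq> 0"
      using assms by auto
    then show "(?g has_field_derivative - (r^2/(x-r)^2)) (at x within {c..d})"
      by (auto intro!: derivative_eq_intros simp: field_simps power2_eq_square)
  qed (use assms in auto)
  moreover have "integral {?g c..?g d} (bwd_quot r a) = 0"
  proof (cases "c = d")
    case False
    then have "?g d < ?g c"
      using assms r by (simp add: divide_strict_left_mono)
    then show ?thesis by simp
  qed simp
  moreover have "- (r^2/(u-r)^2) *\<^sub>R bwd_quot r a (?g u) = bwd_quot r a u" if "u \<in> {c..d}" for u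
    using bwd_quot_inversion_bwd that assms by auto
  ultimately show ?thesis
    using has_integral_cong by (metis (no_types, lifting) diff_0)
qed

lemma inversion_points_around_r:
  assumes "2 * r \<le> b"
  shows "r/2 \<le> r*b/(r+b)" "r*b/(r+b) \<le> r" "r \<le> r + r^2/(b-r)" "r + r^2/(b-r) \<le> 2*r"
proof -
  show "r/2 \<le> r*b/(r+b)" "r*b/(r+b) \<le> r"
    using assms r by (simp_all add: field_simps)
  show "r \<le> r + r^2/(b-r)"
    using assms r by simp
  have "r^2/(b-r) \<le> r^2/r"
    using assms r by (intro divide_left_mono) auto
  then show "r + r^2/(b-r) \<le> 2*r"
    using r by (simp add: power2_eq_square)
qed

lemma integral_sym_quot_cancel:
  assumes e: "0 < e" "e \<le> r/2" and b: "2 * r \<le> b"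
  shows "integral {e..b} (sym_quot r a)
       = integral {r*b/(r+b)..r + r^2/(b-r)} (bwd_quot r a) - integral {r*e/(r+e)..e} (bwd_quot r a)"
proof -
  define pe pb cb where "pe = r*e/(r+e)" and "pb = r*b/(r+b)" and "cb = r + r^2/(b-r)"
  let ?I = "\<lambda>x y. integral {x..y} (bwd_quot r a)"
  have pe: "0 < pe" "pe \<le> e"
    using e r by (simp_all add: pe_def field_simps)
  have pb_cb: "e \<le> pb" "pb \<le> cb" "cb \<le> 2*r"
    using inversion_points_around_r[OF b] e unfolding pb_def cb_def by linarith+
  have fwd: "(fwd_quot r a has_integral - ?I pe pb) {e..b}"
    unfolding pe_def pb_def using e r b by (intro has_integral_fwd_quot) auto
  have "r + r^2/(2*r - r) = 2*r"
    using r by (simp add: power2_eq_square)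
  then have far: "(bwd_quot r a has_integral - ?I cb (2*r)) {2*r..b}"
    using has_integral_bwd_quot_beyond[of "2*r" b] b r unfolding cb_def by simp
  have near: "(bwd_quot r a has_integral ?I e (2*r)) {e..2*r}"
    using bwd_quot_integrable[OF e(1)] by (simp add: has_integral_integral)
  have bwd: "(bwd_quot r a has_integral ?I e (2*r) - ?I cb (2*r)) {e..b}"
    using has_integral_combine[OF _ b near far] e r by simp
  have "((\<lambda>t. fwd_quot r a t + bwd_quot r a t) has_integral - ?I pe pb + (?I e (2*r) - ?I cb (2*r))) {e..b}"
    using fwd bwd by (rule has_integral_add)
  moreover have "fwd_quot r a t + bwd_quot r a t = sym_quot r a t" if "t \<in> {e..b}" for t
    using sym_quot_split that e by auto
  ultimately have "integral {e..b} (sym_quot r a) = - ?I pe pb + (?I e (2*r) - ?I cb (2*r))"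
    using has_integral_cong integral_unique by (metis (no_types, lifting))
  moreover have "?I pe e + ?I e pb = ?I pe pb"
    using pe pb_cb by (intro Henstock_Kurzweil_Integration.integral_combine bwd_quot_integrable) auto
  moreover have "?I e pb + ?I pb (2*r) = ?I e (2*r)"
    using e pb_cb by (intro Henstock_Kurzweil_Integration.integral_combine bwd_quot_integrable) auto
  moreover have "?I pb cb + ?I cb (2*r) = ?I pb (2*r)"
    using e pb_cb by (intro Henstock_Kurzweil_Integration.integral_combine bwd_quot_integrable) auto
  ultimately show ?thesis
    unfolding pe_def pb_def cb_def by linarith
qed

lemma sym_quot_nonpos:
  assumes t: "0 < t" "t \<le> r/2"
  shows "sym_quot r a t \<le> 0"
proof -
  have der: "\<And>x. 0 < x \<Longrightarrow> DERIV (\<lambda>x. x powr a) x :> a * x powr (a - 1)"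
    by (rule has_real_derivative_powr)
  obtain z1 where z1: "r < z1" "(r+t) powr a - r powr a = t * (a * z1 powr (a-1))"
    using MVT2[of r "r+t" "\<lambda>x. x powr a" "\<lambda>x. a * x powr (a - 1)"] der t r by force
  obtain z2 where z2: "z2 < r" "r - t < z2" "r powr a - (r-t) powr a = t * (a * z2 powr (a-1))"
    using MVT2[of "r-t" r "\<lambda>x. x powr a" "\<lambda>x. a * x powr (a - 1)"] der t r by force
  have "z1 powr (a-1) \<le> z2 powr (a-1)"
    using z1 z2 t a_less_1 by (intro powr_mono2') auto
  then have "t * (a * z1 powr (a-1)) \<le> t * (a * z2 powr (a-1))"
    using t a_pos by (intro mult_left_mono) auto
  moreover have "\<bar>r + t\<bar> = r + t" "\<bar>r - t\<bar> = r - t"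
    using t r by auto
  ultimately have "\<bar>r + t\<bar> powr a + \<bar>r - t\<bar> powr a - 2 * r powr a \<le> 0"
    using z1(2) z2(3) by linarith
  then show ?thesis
    unfolding sym_quot_def using t by (simp add: divide_nonpos_pos)
qed

lemma sym_quot_nonneg:
  assumes t: "2 * r \<le> t"
  shows "0 \<le> sym_quot r a t"
proof -
  have "r powr a \<le> \<bar>r + t\<bar> powr a" "r powr a \<le> \<bar>r - t\<bar> powr a"
    using t r a_pos by (intro powr_mono2; simp)+
  then show ?thesis
    unfolding sym_quot_def using t r by (intro divide_nonneg_nonneg) auto
qed

lemma abs_bwd_quot_le:
  assumes t: "0 < t" "t \<le> r"
  shows "\<bar>bwd_quot r a t\<bar> \<le> r powr (a - 1) * t powr (- (a + 1))"
proof -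
  have x: "0 \<le> 1 - t/r" "1 - t/r \<le> 1"
    using t r by auto
  have "(1 - t/r) powr 1 \<le> (1 - t/r) powr a"
    by (rule powr_mono'[OF _ x]) (use a_less_1 in simp)
  then have "r powr a * (1 - t/r) \<le> r powr a * (1 - t/r) powr a"
    using x by (simp add: mult_left_mono)
  also have "\<dots> = \<bar>r - t\<bar> powr a"
    using x t r by (simp add: powr_mult[symmetric] right_diff_distrib)
  finally have lower: "r powr a - r powr (a - 1) * t \<le> \<bar>r - t\<bar> powr a"
    using r by (simp add: right_diff_distrib powr_diff)
  have upper: "\<bar>r - t\<bar> powr a \<le> r powr a"
    using t a_pos by (intro powr_mono2) auto
  have "\<bar>bwd_quot r a t\<bar> = (r powr a - \<bar>r - t\<bar> powr a) / t powr (a + 2)"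
    unfolding bwd_quot_def using upper t by (simp add: abs_div)
  also have "\<dots> \<le> (r powr (a - 1) * t) / t powr (a + 2)"
    using lower t by (intro divide_right_mono) auto
  also have "\<dots> = r powr (a - 1) * t powr (- (a + 1))"
  proof -
    have "t powr (- (a + 1)) = t powr 1 / t powr (a + 2)"
      unfolding powr_diff[symmetric] by (simp add: algebra_simps)
    then show ?thesis
      using t by simp
  qed
  finally show ?thesis .
qed

lemma abs_integral_bwd_quot_near_0_le:
  assumes e: "0 < e" "e \<le> r"
  shows "\<bar>integral {r*e/(r+e)..e} (bwd_quot r a)\<bar> \<le> r powr (a - 1) * (e/2) powr (- (a + 1)) * (e^2/r)"
proof -
  define p where "p = r*e/(r+e)"
  have p: "0 < p" "p \<le> e" "e/2 \<le> p"
    using e r by (simp_all add: p_def field_simps)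
  have "e - p = e^2/(r+e)"
    using e r by (simp add: p_def field_simps power2_eq_square)
  also have "\<dots> \<le> e^2/r"
    using e r by (intro divide_left_mono) auto
  finally have length: "e - p \<le> e^2/r" .
  have "norm (integral {p..e} (bwd_quot r a)) \<le> r powr (a - 1) * (e/2) powr (- (a + 1)) * (e - p)"
  proof (rule integral_bound)
    show "continuous_on {p..e} (bwd_quot r a)"
      using p by (intro continuous_on_subset[OF continuous_on_bwd_quot]) auto
    fix t assume t: "t \<in> {p..e}"
    have "\<bar>bwd_quot r a t\<bar> \<le> r powr (a - 1) * t powr (- (a + 1))"
      using t p e by (intro abs_bwd_quot_le) auto
    also have "\<dots> \<le> r powr (a - 1) * (e/2) powr (- (a + 1))"
      using t p e a_pos by (intro mult_left_mono powr_mono2') auto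
    finally show "norm (bwd_quot r a t) \<le> r powr (a - 1) * (e/2) powr (- (a + 1))"
      by simp
  qed (use p in simp)
  also have "\<dots> \<le> r powr (a - 1) * (e/2) powr (- (a + 1)) * (e^2/r)"
    using length by (intro mult_left_mono) auto
  finally show ?thesis
    unfolding p_def by simp
qed

lemma integral_bwd_quot_near_0_tendsto:
  "((\<lambda>e. integral {r*e/(r+e)..e} (bwd_quot r a)) \<longlongrightarrow> 0) (at_right 0)"
proof (rule Lim_null_comparison)
  show "\<forall>\<^sub>F e in at_right 0. norm (integral {r*e/(r+e)..e} (bwd_quot r a))
          \<le> r powr (a - 1) * (e/2) powr (- (a + 1)) * (e^2/r)"
    unfolding eventually_at_right_field
    using r abs_integral_bwd_quot_near_0_le by (intro exI[of _ r]) auto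
  show "((\<lambda>e. r powr (a - 1) * (e/2) powr (- (a + 1)) * (e^2/r)) \<longlongrightarrow> 0) (at_right 0)"
    using r a_pos a_less_1 by real_asymp
qed

lemma integral_bwd_quot_around_r_tendsto:
  "((\<lambda>b. integral {r*b/(r+b)..r + r^2/(b-r)} (bwd_quot r a)) \<longlongrightarrow> 0) at_top"
proof -
  define \<Phi> where "\<Phi> x = integral {r/2..x} (bwd_quot r a)" for x
  have cont: "continuous_on {r/2..2*r} \<Phi>"
    unfolding \<Phi>_def using r by (intro indefinite_integral_continuous_1 bwd_quot_integrable) auto
  have in_dom: "\<forall>\<^sub>F b in at_top. r*b/(r+b) \<in> {r/2..2*r} \<and> r + r^2/(b-r) \<in> {r/2..2*r}"
    using eventually_ge_at_top[of "2*r"]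
    by eventually_elim (use inversion_points_around_r r in fastforce)
  have "((\<lambda>b. \<Phi> (r + r^2/(b-r)) - \<Phi> (r*b/(r+b))) \<longlongrightarrow> \<Phi> r - \<Phi> r) at_top"
  proof (intro tendsto_diff continuous_on_tendsto_compose[OF cont])
    show "((\<lambda>b. r + r^2/(b-r)) \<longlongrightarrow> r) at_top" "((\<lambda>b. r*b/(r+b)) \<longlongrightarrow> r) at_top"
      using r by real_asymp+
  qed (use r in_dom in \<open>auto elim: eventually_mono\<close>)
  moreover have "\<forall>\<^sub>F b in at_top.
      \<Phi> (r + r^2/(b-r)) - \<Phi> (r*b/(r+b)) = integral {r*b/(r+b)..r + r^2/(b-r)} (bwd_quot r a)"
    using eventually_ge_at_top[of "2*r"]
  proof eventually_elim
    case (elim b)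
    note pts = inversion_points_around_r[OF elim]
    have "\<Phi> (r*b/(r+b)) + integral {r*b/(r+b)..r + r^2/(b-r)} (bwd_quot r a) = \<Phi> (r + r^2/(b-r))"
      unfolding \<Phi>_def using pts r
      by (intro Henstock_Kurzweil_Integration.integral_combine bwd_quot_integrable) auto
    then show ?case by simp
  qed
  ultimately show ?thesis
    by (simp add: Lim_transform_eventually)
qed

lemma has_integral_sym_quot: "(sym_quot r a has_integral 0) {0<..}"
proof -
  have "(sym_quot r a has_integral 0 - 0) {0<..}"
  proof (rule has_integral_Ioi_of_boundary_limits)
    show "0 < r/2" "r/2 \<le> 2*r"
      using r by auto
  qed (use sym_quot_integrable integral_sym_quot_cancel sym_quot_nonpos sym_quot_nonneg
        integral_bwd_quot_near_0_tendsto integral_bwd_quot_around_r_tendsto in auto)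
  then show ?thesis
    by simp
qed

end

lemma grad_eqI:
  fixes \<phi> :: "'a::euclidean_space \<Rightarrow> real"
  assumes "GDERIV \<phi> x :> g"
  shows "grad \<phi> x = g"
  unfolding grad_def
proof (rule some_equality)
  show "(\<phi> has_derivative (\<lambda>h. g \<bullet> h)) (at x)"
    using assms by (simp add: gderiv_def inner_commute)
  fix g' assume "(\<phi> has_derivative (\<lambda>h. g' \<bullet> h)) (at x)"
  from has_derivative_unique[OF this \<open>(\<phi> has_derivative (\<lambda>h. g \<bullet> h)) (at x)\<close>]
  have "g' \<bullet> (g' - g) = g \<bullet> (g' - g)"
    by metis
  then have "(g' - g) \<bullet> (g' - g) = 0"
    by (simp add: inner_diff_left)
  then show "g' = g"
    by simp
qed

lemma GDERIV_norm_diff_powr: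
  fixes x x0 :: "'a::real_inner"
  assumes "x \<noteq> x0"
  shows "GDERIV (\<lambda>y. A * norm (y - x0) powr a + B) x :> (A * a * norm (x - x0) powr (a - 2)) *\<^sub>R (x - x0)"
proof -
  have r: "0 < norm (x - x0)"
    using assms by simp
  have "GDERIV (\<lambda>y. norm (y - x0)) x :> sgn (x - x0)"
    using GDERIV_norm[of "x - x0"] assms unfolding gderiv_def
    by (auto intro: has_derivative_compose[of "\<lambda>y. y - x0", unfolded o_def, rotated]
             intro!: derivative_eq_intros)
  moreover have "DERIV (\<lambda>t. A * t powr a + B) (norm (x - x0)) :> A * (a * norm (x - x0) powr (a - 1))"
    using r by (auto intro!: derivative_eq_intros)
  ultimately have "GDERIV (\<lambda>y. A * norm (y - x0) powr a + B) x
                     :> (A * (a * norm (x - x0) powr (a - 1))) *\<^sub>R sgn (x - x0)"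
    by (rule GDERIV_DERIV_compose)
  moreover have "A * (a * norm (x - x0) powr (a - 1)) / norm (x - x0) = A * a * norm (x - x0) powr (a - 2)"
    using r by (simp add: powr_diff powr_numeral power2_eq_square)
  then have "(A * (a * norm (x - x0) powr (a - 1))) *\<^sub>R sgn (x - x0)
           = (A * a * norm (x - x0) powr (a - 2)) *\<^sub>R (x - x0)"
    by (simp add: sgn_div_norm divide_inverse_commute mult.commute)
  ultimately show ?thesis
    by simp
qed

lemma norm_add_scaleR_sgn:
  fixes d :: "'a::real_normed_vector"
  assumes "d \<noteq> 0"
  shows "norm (d + t *\<^sub>R sgn d) = \<bar>norm d + t\<bar>"
proof -
  have "d + t *\<^sub>R sgn d = ((norm d + t) / norm d) *\<^sub>R d"
    using assms by (simp add: sgn_div_norm algebra_simps divide_inverse)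
  then show ?thesis
    using assms by (simp add: abs_div)
qed

lemma two_sided_integrand_radial:
  fixes x x0 :: "'a::euclidean_space"
  assumes "x \<noteq> x0" and \<sigma>: "\<bar>\<sigma>\<bar> = 1"
  shows "two_sided_integrand s (\<lambda>y. A * norm (y - x0) powr (2 * s - 1) + B) x (\<sigma> *\<^sub>R sgn (x - x0))
       = (\<lambda>\<eta>. A * sym_quot (norm (x - x0)) (2 * s - 1) \<eta>)"
proof
  fix \<eta>
  define r where "r = norm (x - x0)"
  have d: "x - x0 \<noteq> 0"
    using assms by simp
  have plus: "norm (x + \<eta> *\<^sub>R (\<sigma> *\<^sub>R sgn (x - x0)) - x0) = \<bar>r + \<eta> * \<sigma>\<bar>"
    using norm_add_scaleR_sgn[OF d, of "\<eta> * \<sigma>"] by (simp add: r_def algebra_simps)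
  have minus: "norm (x - \<eta> *\<^sub>R (\<sigma> *\<^sub>R sgn (x - x0)) - x0) = \<bar>r - \<eta> * \<sigma>\<bar>"
    using norm_add_scaleR_sgn[OF d, of "- (\<eta> * \<sigma>)"] by (simp add: r_def algebra_simps)
  have profile_sum: "\<bar>r + \<eta> * \<sigma>\<bar> powr (2 * s - 1) + \<bar>r - \<eta> * \<sigma>\<bar> powr (2 * s - 1)
      = \<bar>r + \<eta>\<bar> powr (2 * s - 1) + \<bar>r - \<eta>\<bar> powr (2 * s - 1)"
  proof -
    have "\<sigma> = 1 \<or> \<sigma> = -1"
      using \<sigma> by (auto simp: abs_if split: if_splits)
    then show ?thesis
      by (elim disjE) (simp_all add: add.commute)
  qed
  have numerator:
    "A * \<bar>r + \<eta> * \<sigma>\<bar> powr (2 * s - 1) + B + (A * \<bar>r - \<eta> * \<sigma>\<bar> powr (2 * s - 1) + B)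
       - 2 * (A * r powr (2 * s - 1) + B)
     = A * (\<bar>r + \<eta>\<bar> powr (2 * s - 1) + \<bar>r - \<eta>\<bar> powr (2 * s - 1) - 2 * r powr (2 * s - 1))"
    using arg_cong[where f = "\<lambda>u. A * u", OF profile_sum] by (simp add: algebra_simps)
  have "1 + 2 * s = (2 * s - 1) + 2"
    by simp
  then show "two_sided_integrand s (\<lambda>y. A * norm (y - x0) powr (2 * s - 1) + B) x (\<sigma> *\<^sub>R sgn (x - x0)) \<eta>
       = A * sym_quot (norm (x - x0)) (2 * s - 1) \<eta>"
    unfolding two_sided_integrand_def sym_quot_def plus minus r_def[symmetric] numerator
    by simp
qed


theorem lemma3p6:
  fixes s A B :: real and x0 x :: "'a::euclidean_space"
  assumes "1/2 < s" "s < 1" and "x \<noteq> x0"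
  shows "inf_frac_lap_defined s (\<lambda>y. A * norm (y - x0) powr (2 * s - 1) + B) x
       \<and> inf_frac_lap s (\<lambda>y. A * norm (y - x0) powr (2 * s - 1) + B) x = 0"
proof -
  define \<phi> where "\<phi> = (\<lambda>y. A * norm (y - x0) powr (2 * s - 1) + B)"
  define c where "c = A * (2 * s - 1) * norm (x - x0) powr (2 * s - 1 - 2)"
  have "GDERIV \<phi> x :> c *\<^sub>R (x - x0)"
    unfolding \<phi>_def c_def using GDERIV_norm_diff_powr[OF assms(3)] .
  then have grad: "grad \<phi> x = c *\<^sub>R (x - x0)" and diff: "\<phi> differentiable (at x)"
    by (auto simp: grad_eqI gderiv_def differentiable_def)
  show ?thesis
  proof (cases "A = 0")
    case True
    then have "one_sided_integrand s \<phi> x y = (\<lambda>_. 0)" for y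
      by (auto simp: one_sided_integrand_def \<phi>_def)
    moreover have "sphere (0::'a) 1 \<noteq> {}"
      by simp
    ultimately show ?thesis
      using diff grad True unfolding \<phi>_def[symmetric] inf_frac_lap_defined_def inf_frac_lap_def
      by (simp add: c_def integrable_0)
  next
    case False
    then have "c \<noteq> 0"
      using assms by (simp add: c_def)
    then have "\<bar>sgn c\<bar> = 1"
      by (simp add: abs_sgn_eq)
    moreover have "grad \<phi> x /\<^sub>R norm (grad \<phi> x) = sgn c *\<^sub>R sgn (x - x0)"
      unfolding grad sgn_div_norm[symmetric] by (rule sgn_scaleR)
    ultimately have "(two_sided_integrand s \<phi> x (grad \<phi> x /\<^sub>R norm (grad \<phi> x)) has_integral 0) {0<..}"
      using has_integral_mult_right[OF has_integral_sym_quot, of "norm (x - x0)" "2 * s - 1" A] assms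
      unfolding \<phi>_def by (simp add: two_sided_integrand_radial)
    then show ?thesis
      using diff grad \<open>c \<noteq> 0\<close> assms(3) unfolding \<phi>_def[symmetric] inf_frac_lap_defined_def inf_frac_lap_def
      by (auto simp: integral_unique)
  qed
qed

end
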